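(* Let $d=(L,Z)$ be a pure Euler diagram such that for each missing zone $z\in M(d)$ there is a contour $\ell\in L$ with $\mathrm{adj}(z,\ell)\in M(d)$, and let $L'=\{c\in L\mid M(d\setminus c)\neq\emptyset\}$. Then for every Heyting algebra and every valuation $v$, $\bigwedge_{c\in L'}[\![d\setminus c]\!]_v=[\![d]\!]_v$.
   Context: Fix a countably infinite set $\mathcal V$ of propositional variables. A Heyting algebra $(H,\vee,\wedge,\to,0,1)$ is a bounded distributive lattice with a binary operation $\to$ such that $c\wedge a\le b\iff c\le a\to b$; empty meets are $1$, empty joins are $0$. A valuation is a map $v:\mathcal V\to H$. For a finite $L\subset\mathcal V$, a zone over $L$ is a pair $z=(\mathrm{in}(z),\mathrm{out}(z))$ of disjoint subsets of $L$ with union $L$; $\mathcal Z(L)$ is the set of all zones over $L$. Missing-zone semantics: $m_v(z)=\big(\bigwedge_{c\in\mathrm{in}(z)}v(c)\big)\to\big(\bigvee_{c\in\mathrm{out}(z)}v(c)\big)$. A pure Euler diagram is $d=(L,Z)$ with $Z\subseteq\mathcal Z(L)$; its missing zones are $M(d)=\mathcal Z(L)\setminus Z$ and $[\![d]\!]_v=\bigwedge_{z\in M(d)}m_v(z)$. For $c\in L$, $\mathrm{adj}(z,c)$ is the zone obtained from $z$ by moving $c$ from $\mathrm{out}(z)$ to $\mathrm{in}(z)$ or from $\mathrm{in}(z)$ to $\mathrm{out}(z)$. Reduction: $z\setminus c=(\mathrm{in}(z)\setminus\{c\},\mathrm{out}(z)\setminus\{c\})$ and $d\setminus c=(L\setminus\{c\},\{z\setminus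 c: z\in Z\})$, a pure Euler diagram over $L\setminus\{c\}$. *)

theory Defs
  imports Main
begin

class heyting_algebra = distrib_lattice + bounded_lattice +
  fixes himp :: "'a \<Rightarrow> 'a \<Rightarrow> 'a" (infixr "\<Rightarrow>\<^sub>H" 60)
  assumes himp_residuation: "inf c a \<le> b \<longleftrightarrow> c \<le> himp a b"

definition fmeet :: "('b \<Rightarrow> 'a::bounded_lattice) \<Rightarrow> 'b set \<Rightarrow> 'a" where
  "fmeet f A = Finite_Set.fold (\<lambda>x acc. inf (f x) acc) top A"

definition fjoin :: "('b \<Rightarrow> 'a::bounded_lattice) \<Rightarrow> 'b set \<Rightarrow> 'a" where
  "fjoin f A = Finite_Set.fold (\<lambda>x acc. sup (f x) acc) bot A"

text \<open>Propositional variables: the countably infinite type nat.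
A zone is a pair (in, out) of sets of variables.\<close>

type_synonym var = nat
type_synonym zone = "var set \<times> var set"

definition zones :: "var set \<Rightarrow> zone set" where
  "zones L = {z. fst z \<inter> snd z = {} \<and> fst z \<union> snd z = L}"

definition pure_euler_diagram :: "var set \<Rightarrow> zone set \<Rightarrow> bool" where
  "pure_euler_diagram L Z \<longleftrightarrow> finite L \<and> Z \<subseteq> zones L"

definition missing :: "var set \<Rightarrow> zone set \<Rightarrow> zone set" where
  "missing L Z = zones L - Z"

definition mzone :: "(var \<Rightarrow> 'a::heyting_algebra) \<Rightarrow> zone \<Rightarrow> 'a" where
  "mzone v z = himp (fmeet v (fst z)) (fjoin v (snd z))"

definition sem :: "var set \<Rightarrow> zone set \<Rightarrow> (var \<Rightarrow> 'a::heyting_algebra) \<Rightarrow> 'a" where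
  "sem L Z v = fmeet (mzone v) (missing L Z)"

definition adj :: "zone \<Rightarrow> var \<Rightarrow> zone" where
  "adj z c = (if c \<in> fst z then (fst z - {c}, snd z \<union> {c})
              else (fst z \<union> {c}, snd z - {c}))"

definition zred :: "zone \<Rightarrow> var \<Rightarrow> zone" where
  "zred z c = (fst z - {c}, snd z - {c})"

definition red_L :: "var set \<Rightarrow> var \<Rightarrow> var set" where
  "red_L L c = L - {c}"

definition red_Z :: "zone set \<Rightarrow> var \<Rightarrow> zone set" where
  "red_Z Z c = (\<lambda>z. zred z c) ` Z"

end

theory Submission
  imports Defs
begin

text \<open>Reducing by a contour c glues every zone z to its neighbour adj z c. A zone of the
reduced diagram is therefore missing exactly when both zones glued into it are missing, and
the Heyting identity a \<rightarrow> b = (c \<and> a \<rightarrow> b) \<and> (a \<rightarrow> c \<or> b) makes its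
missing-zone formula the meet of theirs. So the semantics of the reduction by c is the meet
of m(z) over the missing zones z whose c-neighbour is missing too. By hypothesis every
missing zone has a missing neighbour along some contour, which then belongs to L', so the
meet over L' covers every missing zone.\<close>

lemma le_himp_iff: "(x::'a::heyting_algebra) \<le> himp a b \<longleftrightarrow> inf x a \<le> b"
  using himp_residuation by blast

lemma le_by_cases_distrib:
  fixes y b c :: "'a::distrib_lattice"
  assumes "inf y c \<le> b" and "y \<le> sup c b"
  shows "y \<le> b"
proof -
  have "y = inf y (sup c b)" using assms(2) by (simp add: inf_absorb1)
  also have "\<dots> = sup (inf y c) (inf y b)" by (rule inf_sup_distrib1)
  also have "\<dots> \<le> b" using assms(1) by simp
  finally show ?thesis .
qed

lemma himp_case_split:
  fixes a b c :: "'a::heyting_algebra"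
  shows "himp a b = inf (himp (inf c a) b) (himp a (sup c b))"
proof -
  have "x \<le> himp a b \<longleftrightarrow> x \<le> inf (himp (inf c a) b) (himp a (sup c b))" for x
  proof -
    have "x \<le> inf (himp (inf c a) b) (himp a (sup c b)) \<longleftrightarrow>
          inf (inf x a) c \<le> b \<and> inf x a \<le> sup c b"
      by (simp add: le_himp_iff ac_simps)
    also have "\<dots> \<longleftrightarrow> inf x a \<le> b"
      by (meson le_by_cases_distrib inf_le1 le_supI2 order_trans)
    finally show ?thesis by (simp add: le_himp_iff)
  qed
  then show ?thesis by (meson order.antisym order.refl)
qed

lemma comp_fun_commute_inf:
  "comp_fun_commute_on UNIV (\<lambda>x acc. inf ((f x)::'a::bounded_lattice) acc)"
  by unfold_locales (auto simp: fun_eq_iff inf_left_commute)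

lemma comp_fun_commute_sup:
  "comp_fun_commute_on UNIV (\<lambda>x acc. sup ((f x)::'a::bounded_lattice) acc)"
  by unfold_locales (auto simp: fun_eq_iff sup_left_commute)

lemma fmeet_insert: "finite A \<Longrightarrow> c \<notin> A \<Longrightarrow> fmeet f (insert c A) = inf (f c) (fmeet f A)"
  unfolding fmeet_def by (simp add: comp_fun_commute_on.fold_insert[OF comp_fun_commute_inf])

lemma fjoin_insert: "finite A \<Longrightarrow> c \<notin> A \<Longrightarrow> fjoin f (insert c A) = sup (f c) (fjoin f A)"
  unfolding fjoin_def by (simp add: comp_fun_commute_on.fold_insert[OF comp_fun_commute_sup])

lemma le_fmeet_iff: "finite A \<Longrightarrow> x \<le> fmeet f A \<longleftrightarrow> (\<forall>a\<in>A. x \<le> f a)"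
  by (induction A rule: finite_induct) (simp_all add: fmeet_def[of f "{}"] fmeet_insert)

lemma finite_zones: "finite L \<Longrightarrow> finite (zones L)"
  by (rule finite_subset[of _ "Pow L \<times> Pow L"]) (auto simp: zones_def)

lemma le_sem_iff: "finite L \<Longrightarrow> x \<le> sem L Z v \<longleftrightarrow> (\<forall>z\<in>missing L Z. x \<le> mzone v z)"
  unfolding sem_def missing_def by (simp add: le_fmeet_iff finite_zones)

lemma mzone_split:
  assumes "c \<notin> fst w" "c \<notin> snd w" "finite (fst w)" "finite (snd w)"
  shows "mzone v w = inf (mzone v (insert c (fst w), snd w)) (mzone v (fst w, insert c (snd w)))"
  using assms by (simp add: mzone_def fmeet_insert fjoin_insert himp_case_split[symmetric])

lemma adj_in_zones: "z \<in> zones L \<Longrightarrow> c \<in> L \<Longrightarrow> adj z c \<in> zones L"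
  by (auto simp: zones_def adj_def)

lemma adj_adj: "z \<in> zones L \<Longrightarrow> c \<in> L \<Longrightarrow> adj (adj z c) c = z"
  by (auto simp: zones_def adj_def prod_eq_iff)

lemma zred_adj: "zred (adj z c) c = zred z c"
  by (auto simp: zred_def adj_def)

lemma zred_in_zones: "z \<in> zones L \<Longrightarrow> zred z c \<in> zones (L - {c})"
  by (auto simp: zones_def zred_def)

lemma zred_surj:
  assumes "w \<in> zones (L - {c})" "c \<in> L"
  shows "\<exists>z\<in>zones L. zred z c = w"
  using assms
  by (intro bexI[of _ "(insert c (fst w), snd w)"]) (auto simp: zones_def zred_def prod_eq_iff)

lemma zred_eq_iff:
  assumes "z \<in> zones L" "z' \<in> zones L" "c \<in> L"
  shows "zred z' c = zred z c \<longleftrightarrow> z' = z \<or> z' = adj z c"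
  using assms by (auto simp: zones_def zred_def adj_def prod_eq_iff)

lemma missing_red:
  assumes Z: "Z \<subseteq> zones L" and c: "c \<in> L"
  shows "missing (red_L L c) (red_Z Z c) =
         (\<lambda>z. zred z c) ` {z \<in> missing L Z. adj z c \<in> missing L Z}"
proof (intro equalityI subsetI)
  fix w assume "w \<in> missing (red_L L c) (red_Z Z c)"
  then have w: "w \<in> zones (L - {c})" "w \<notin> red_Z Z c"
    by (simp_all add: missing_def red_L_def)
  obtain z where z: "z \<in> zones L" "zred z c = w" using zred_surj[OF w(1) c] by blast
  have "z \<notin> Z" "adj z c \<notin> Z"
    using w(2) z(2) unfolding red_Z_def by (metis image_eqI zred_adj)+
  then show "w \<in> (\<lambda>z. zred z c) ` {z \<in> missing L Z. adj z c \<in> missing L Z}"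
    using z adj_in_zones[OF z(1) c] by (auto simp: missing_def)
next
  fix w assume "w \<in> (\<lambda>z. zred z c) ` {z \<in> missing L Z. adj z c \<in> missing L Z}"
  then obtain z where z: "z \<in> missing L Z" "adj z c \<in> missing L Z" "w = zred z c"
    by blast
  have zL: "z \<in> zones L" using z(1) by (simp add: missing_def)
  have "w \<notin> red_Z Z c"
  proof
    assume "w \<in> red_Z Z c"
    then obtain z' where "z' \<in> Z" "zred z' c = zred z c" using z(3) by (auto simp: red_Z_def)
    then show False
      using zred_eq_iff[OF zL _ c, of z'] Z z(1,2) by (auto simp: missing_def)
  qed
  then show "w \<in> missing (red_L L c) (red_Z Z c)"
    using z(3) zred_in_zones[OF zL] by (simp add: missing_def red_L_def)
qed

lemma mzone_zred:
  assumes L: "finite L" and z: "z \<in> zones L" and c: "c \<in> L"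
  shows "mzone v (zred z c) = inf (mzone v z) (mzone v (adj z c))"
proof -
  define w where "w = zred z c"
  have w: "w \<in> zones (L - {c})" using zred_in_zones[OF z] by (simp add: w_def)
  then have "c \<notin> fst w" "c \<notin> snd w" "finite (fst w)" "finite (snd w)"
    using L by (auto simp: zones_def intro: finite_subset)
  note split = mzone_split[OF this, of v]
  show ?thesis
  proof (cases "c \<in> fst z")
    case True
    then have "z = (insert c (fst w), snd w)" "adj z c = (fst w, insert c (snd w))"
      using z by (auto simp: w_def zred_def adj_def zones_def prod_eq_iff)
    then show ?thesis using split by (simp add: w_def)
  next
    case False
    then have "z = (fst w, insert c (snd w))" "adj z c = (insert c (fst w), snd w)"
      using z c by (auto simp: w_def zred_def adj_def zones_def prod_eq_iff)
    then show ?thesis using split by (simp add: w_def inf_commute)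
  qed
qed

lemma le_sem_red_iff:
  assumes L: "finite L" and Z: "Z \<subseteq> zones L" and c: "c \<in> L"
  shows "x \<le> sem (red_L L c) (red_Z Z c) v \<longleftrightarrow>
         (\<forall>z\<in>missing L Z. adj z c \<in> missing L Z \<longrightarrow> x \<le> mzone v z)"
proof -
  have zones: "z \<in> zones L" if "z \<in> missing L Z" for z
    using that by (simp add: missing_def)
  have "x \<le> sem (red_L L c) (red_Z Z c) v \<longleftrightarrow>
        (\<forall>z\<in>missing L Z. adj z c \<in> missing L Z \<longrightarrow>
           x \<le> mzone v z \<and> x \<le> mzone v (adj z c))"
    using L by (simp add: le_sem_iff red_L_def missing_red[OF Z c, unfolded red_L_def]
        mzone_zred[OF L zones c] del: split_paired_All) blast
  also have "\<dots> \<longleftrightarrow> (\<forall>z\<in>missing L Z. adj z c \<in> missing L Z \<longrightarrow> x \<le> mzone v z)"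
    using adj_adj[OF zones c] by metis
  finally show ?thesis .
qed

lemma missing_red_nonempty:
  assumes "Z \<subseteq> zones L" "z \<in> missing L Z" "c \<in> L" "adj z c \<in> missing L Z"
  shows "missing (red_L L c) (red_Z Z c) \<noteq> {}"
proof -
  have "zred z c \<in> missing (red_L L c) (red_Z Z c)"
    unfolding missing_red[OF assms(1,3)] using assms(2,4) by (intro imageI) simp
  then show ?thesis by blast
qed

theorem lemma5:
  fixes L :: "var set" and Z :: "zone set" and v :: "var \<Rightarrow> 'a::heyting_algebra"
  assumes "pure_euler_diagram L Z"
    and "\<forall>z \<in> missing L Z. \<exists>l \<in> L. adj z l \<in> missing L Z"
  shows "fmeet (\<lambda>c. sem (red_L L c) (red_Z Z c) v)
            {c \<in> L. missing (red_L L c) (red_Z Z c) \<noteq> {}}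
         = sem L Z v"
proof -
  have L: "finite L" and Z: "Z \<subseteq> zones L"
    using assms(1) by (auto simp: pure_euler_diagram_def)
  let ?L' = "{c \<in> L. missing (red_L L c) (red_Z Z c) \<noteq> {}}"
  have "x \<le> fmeet (\<lambda>c. sem (red_L L c) (red_Z Z c) v) ?L' \<longleftrightarrow> x \<le> sem L Z v" for x
  proof -
    have "x \<le> fmeet (\<lambda>c. sem (red_L L c) (red_Z Z c) v) ?L' \<longleftrightarrow>
          (\<forall>c\<in>?L'. \<forall>z\<in>missing L Z. adj z c \<in> missing L Z \<longrightarrow> x \<le> mzone v z)"
      using L by (simp add: le_fmeet_iff le_sem_red_iff[OF L Z])
    also have "\<dots> \<longleftrightarrow> (\<forall>z\<in>missing L Z. x \<le> mzone v z)"
    proof (intro iffI ballI)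
      fix z assume below: "\<forall>c\<in>?L'. \<forall>z\<in>missing L Z. adj z c \<in> missing L Z \<longrightarrow> x \<le> mzone v z"
        and z: "z \<in> missing L Z"
      obtain l where l: "l \<in> L" "adj z l \<in> missing L Z" using assms(2) z by blast
      then have "l \<in> ?L'" using missing_red_nonempty[OF Z z] by simp
      then show "x \<le> mzone v z" using below z l(2) by simp
    qed simp
    also have "\<dots> \<longleftrightarrow> x \<le> sem L Z v"
      by (rule le_sem_iff[OF L, symmetric])
    finally show ?thesis .
  qed
  then show ?thesis by (meson order.antisym order.refl)
qed

end
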